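(* Let $A\in\mathbb{R}^{m\times n}$ with $m>n$ be a full-rank standardized matrix with no two distinct rows parallel, let $x\in\mathbb{R}^n$, and let $b=Ax$. Let $x_k$ denote the $k$-th iterate of the two-subspace Kaczmarz method applied to $(A,b)$ from a deterministic starting point $x_0$. Then for every $k\ge 0$, $$\mathbb{E}\|x-x_k\|_2^2\le\left(\left(1-\frac1R\right)^2-\frac{D}{R}\right)^k\|x-x_0\|_2^2,$$ where $D=\min\left\{\frac{\delta^2(1-\delta)}{1+\delta},\frac{\Delta^2(1-\Delta)}{1+\Delta}\right\}$.
   Context: $A\in\mathbb{R}^{m\times n}$ has rows $a_1,\dots,a_m$. It is called standardized if $\|a_i\|_2=1$ for all $i$. "No two distinct rows parallel" means $|\langle a_r,a_s\rangle|<1$ for all $r\ne s$. Two-subspace Kaczmarz method for $(A,b)$, $b\in\mathbb{R}^m$: start from $x_0\in\mathbb{R}^n$. For $k=1,2,\dots$, choose an ordered pair $(r,s)$ of distinct indices in $\{1,\dots,m\}$ uniformly at random among the $m^2-m$ such pairs, independently of all previous choices. Then set $\mu_k=\langle a_r,a_s\rangle$, $y_k=x_{k-1}+(b_s-\langle x_{k-1},a_s\rangle)a_s$, $v_k=\frac{a_r-\mu_k a_s}{\sqrt{1-\mu_k^2}}$, $\beta_k=\frac{b_r-b_s\mu_k}{\sqrt{1-\mu_k^2}}$, and $x_k=y_k+(\beta_k-\langle y_k,v_k\rangle)v_k$. Coherence parameters: $\Delta=\max_{j\ne k}|\langle a_j,a_k\rangle|$ and $\delta=\min_{j\ne k}|\langle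 a_j,a_k\rangle|$. Scaled condition number: $R=\|A\|_F^2\|A^{-1}\|^2$, where $\|A^{-1}\|=\inf\{M: M\|Az\|_2\ge\|z\|_2\ \text{for all } z\}$, i.e. the reciprocal of the smallest singular value of $A$. *)

theory Defs
  imports "HOL-Analysis.Analysis" "HOL-Probability.Probability"
begin

text \<open>Matrices A in R^(m x n) are elements of real^'n^'m; row i is A $ i.\<close>

definition standardized :: "real^'n^'m \<Rightarrow> bool" where
  "standardized A \<longleftrightarrow> (\<forall>i. norm (A $ i) = 1)"

definition no_parallel_rows :: "real^'n^'m \<Rightarrow> bool" where
  "no_parallel_rows A \<longleftrightarrow> (\<forall>r s. r \<noteq> s \<longrightarrow> \<bar>(A $ r) \<bullet> (A $ s)\<bar> < 1)"

definition coh_max :: "real^'n^'m \<Rightarrow> real" where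
  "coh_max A = Max {\<bar>(A $ j) \<bullet> (A $ k)\<bar> | j k. j \<noteq> k}"

definition coh_min :: "real^'n^'m \<Rightarrow> real" where
  "coh_min A = Min {\<bar>(A $ j) \<bullet> (A $ k)\<bar> | j k. j \<noteq> k}"

definition frob_sq :: "real^'n^'m \<Rightarrow> real" where
  "frob_sq A = (\<Sum>i\<in>UNIV. (\<Sum>j\<in>UNIV. (A $ i $ j)^2))"

definition inv_norm :: "real^'n^'m \<Rightarrow> real" where
  "inv_norm A = Inf {M. \<forall>z. M * norm (A *v z) \<ge> norm z}"

definition scaled_cond :: "real^'n^'m \<Rightarrow> real" where
  "scaled_cond A = frob_sq A * (inv_norm A)^2"

definition tsk_step :: "real^'n^'m \<Rightarrow> real^'m \<Rightarrow> real^'n \<Rightarrow> 'm \<times> 'm \<Rightarrow> real^'n" where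
  "tsk_step A b xp p = (case p of (r, s) \<Rightarrow>
     let \<mu> = (A $ r) \<bullet> (A $ s);
         y = xp + (b $ s - xp \<bullet> (A $ s)) *\<^sub>R (A $ s);
         v = (1 / sqrt (1 - \<mu>^2)) *\<^sub>R (A $ r - \<mu> *\<^sub>R (A $ s));
         \<beta> = (b $ r - b $ s * \<mu>) / sqrt (1 - \<mu>^2)
     in y + (\<beta> - y \<bullet> v) *\<^sub>R v)"

definition tsk_iter :: "real^'n^'m \<Rightarrow> real^'m \<Rightarrow> real^'n \<Rightarrow> ('m \<times> 'm) list \<Rightarrow> real^'n" where
  "tsk_iter A b x0 ps = foldl (tsk_step A b) x0 ps"

definition ordered_pairs :: "('m \<times> 'm) set" where
  "ordered_pairs = {(r, s). r \<noteq> s}"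

text \<open>Law of the first k choices: k independent uniform choices from the ordered pairs,
  i.e. the uniform distribution on length-k sequences of such pairs.\<close>
definition pair_seqs :: "nat \<Rightarrow> ('m \<times> 'm) list set" where
  "pair_seqs k = {ps. length ps = k \<and> set ps \<subseteq> ordered_pairs}"

definition tsk_expected_sq_err ::
  "real^'n^'m \<Rightarrow> real^'m \<Rightarrow> real^'n \<Rightarrow> real^'n \<Rightarrow> nat \<Rightarrow> real" where
  "tsk_expected_sq_err A b x0 x k =
     measure_pmf.expectation (pmf_of_set (pair_seqs k)) (\<lambda>ps. (norm (x - tsk_iter A b x0 ps))^2)"

end

theory Submission
  imports Defs
begin

text \<open>
  Write d = x - x_k for the current error and u_i = a_i \<bullet> d.  One step with the pair (r,s)
  projects d twice, so that (with \<mu> = a_r \<bullet> a_s)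
    |x - x_{k+1}|^2 = |d|^2 - u_s^2 - (u_r - \<mu> u_s)^2 / (1 - \<mu>^2),
  and we split the last quotient as q + \<mu>^2/(1-\<mu>^2) q with q = (u_r - \<mu> u_s)^2.
  Summing over all m(m-1) ordered pairs:
  \<^item> the terms u_s^2 contribute (m-1)|Ad|^2;
  \<^item> for fixed s the q-terms are |A(d - u_s a_s)|^2 \<ge> |d - u_s a_s|^2 / \<parallel>A^-1\<parallel>^2,
    giving (m|d|^2 - |Ad|^2) / \<parallel>A^-1\<parallel>^2 in total;
  \<^item> symmetrising over (r,s) and (s,r), the remaining terms are at least D (m-1)|Ad|^2, where
    the coherence gain t^2(1-t)/(1+t) is minimised over [\<delta>,\<Delta>] at an endpoint.
  An elementary inequality in |d|^2 and |Ad|^2 turns this into the one-step contraction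
  \<Sum>_{(r,s)} |x - x_{k+1}|^2 \<le> c m(m-1)|d|^2; iterating over all pair sequences and dividing by
  their number (m(m-1))^k gives the bound on the expected squared error.
\<close>

section \<open>Scalar inequalities\<close>

definition coherence_gain :: "real \<Rightarrow> real" where
  "coherence_gain t = t^2 * (1 - t) / (1 + t)"

lemma coherence_gain_diff:
  fixes a t :: real
  assumes "0 \<le> a" "0 \<le> t" "a < 1" "t < 1"
  shows "coherence_gain t - coherence_gain a
       = (t - a) * (a * (1 - a - t^2) + t * (1 - t - a^2)) / ((1 + a) * (1 + t))"
  using assms unfolding coherence_gain_def
  by (simp add: field_simps) (simp add: algebra_simps power2_eq_square)

text \<open>The gain increases and then decreases on [0,1), so on an interval it is minimised at
  one of the endpoints.\<close>
lemma coherence_gain_min_endpoints: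
  fixes a t c :: real
  assumes "0 \<le> a" "a \<le> t" "t \<le> c" "c < 1"
  shows "min (coherence_gain a) (coherence_gain c) \<le> coherence_gain t"
proof (cases "1 - t - t^2 \<ge> 0")
  case True
  have "a^2 \<le> t^2" using assms by (simp add: power_mono)
  hence "a * (1 - a - t^2) + t * (1 - t - a^2) \<ge> 0"
    using True assms by (intro add_nonneg_nonneg mult_nonneg_nonneg) linarith+
  hence "coherence_gain t - coherence_gain a \<ge> 0"
    using coherence_gain_diff[of a t] assms by (simp add: divide_nonneg_pos)
  thus ?thesis by linarith
next
  case False
  have "t^2 \<le> c^2" using assms by (simp add: power_mono)
  hence "t * (1 - t - c^2) + c * (1 - c - t^2) \<le> 0"
    using False assms
    by (intro add_nonpos_nonpos mult_nonneg_nonpos) linarith+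
  hence "coherence_gain c - coherence_gain t \<le> 0"
    using coherence_gain_diff[of t c] assms by (simp add: divide_nonpos_pos mult_nonneg_nonpos)
  thus ?thesis by linarith
qed

lemma coherence_pair_bound:
  fixes \<mu> u w \<delta> \<Delta> :: real
  assumes "0 \<le> \<delta>" "\<delta> \<le> \<bar>\<mu>\<bar>" "\<bar>\<mu>\<bar> \<le> \<Delta>" "\<Delta> < 1"
  shows "min (coherence_gain \<delta>) (coherence_gain \<Delta>) * (u^2 + w^2)
         \<le> \<mu>^2 / (1 - \<mu>^2) * ((u - \<mu> * w)^2 + (w - \<mu> * u)^2)"
proof -
  define t where "t = \<bar>\<mu>\<bar>"
  have t: "0 \<le> t" "t < 1" "\<mu>^2 = t^2" using assms unfolding t_def by auto
  have "2 * \<bar>u\<bar> * \<bar>w\<bar> \<le> u^2 + w^2"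
    using sum_squares_bound[of "\<bar>u\<bar>" "\<bar>w\<bar>"] by (simp add: power2_eq_square)
  moreover have "\<mu> * u * w \<le> t * \<bar>u\<bar> * \<bar>w\<bar>" unfolding t_def
    by (metis abs_ge_self abs_mult mult.assoc)
  ultimately have "\<mu> * u * w \<le> t * ((u^2 + w^2) / 2)"
    using mult_left_mono[of "\<bar>u\<bar> * \<bar>w\<bar>" "(u^2 + w^2) / 2" t] t by (simp add: mult.assoc)
  moreover have "(u - \<mu> * w)^2 + (w - \<mu> * u)^2 = (1 + t^2) * (u^2 + w^2) - 4 * (\<mu> * u * w)"
    unfolding t(3)[symmetric] by (simp add: power2_eq_square algebra_simps)
  moreover have "(1 - t)^2 * (u^2 + w^2) = (1 + t^2) * (u^2 + w^2) - 4 * (t * ((u^2 + w^2) / 2))"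
    by (simp add: power2_eq_square algebra_simps)
  ultimately have lower: "(1 - t)^2 * (u^2 + w^2) \<le> (u - \<mu> * w)^2 + (w - \<mu> * u)^2"
    by linarith
  have weight: "\<mu>^2 / (1 - \<mu>^2) * (1 - t)^2 = coherence_gain t"
  proof -
    have "1 - \<mu>^2 = (1 - t) * (1 + t)" using t by (simp add: power2_eq_square algebra_simps)
    moreover have "1 - t \<noteq> 0" "1 + t \<noteq> 0" using t by auto
    ultimately show ?thesis using t unfolding coherence_gain_def
      by (simp add: power2_eq_square)
  qed
  have "min (coherence_gain \<delta>) (coherence_gain \<Delta>) * (u^2 + w^2) \<le> coherence_gain t * (u^2 + w^2)"
    using coherence_gain_min_endpoints[of \<delta> t \<Delta>] assms unfolding t_def
    by (intro mult_right_mono) auto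
  also have "\<dots> = \<mu>^2 / (1 - \<mu>^2) * ((1 - t)^2 * (u^2 + w^2))"
    by (simp add: weight[symmetric])
  also have "\<dots> \<le> \<mu>^2 / (1 - \<mu>^2) * ((u - \<mu> * w)^2 + (w - \<mu> * u)^2)"
  proof -
    have "t^2 < 1" using t by (simp add: abs_square_less_1)
    thus ?thesis using t lower by (intro mult_left_mono) auto
  qed
  finally show ?thesis .
qed

text \<open>The final arithmetic: with E = |d|^2, S = |Ad|^2, \<rho> = 1/R and the bounds
  m \<rho> E \<le> S \<le> m E, the summed one-step error is at most the claimed rate times m(m-1)E.\<close>
lemma contraction_arith:
  fixes m \<rho> D E S :: real
  assumes "m \<ge> 2" "\<rho> > 0" "D \<ge> 0" "E \<ge> 0" "m * \<rho> * E \<le> S" "S \<le> m * E"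
  shows "m * (m - 1) * E - (m - 1) * S - m * \<rho> * (m * E - S) - D * (m - 1) * S
         \<le> ((1 - \<rho>)^2 - D * \<rho>) * (m * (m - 1) * E)"
proof (cases "E = 0")
  case True
  thus ?thesis using assms by simp
next
  case False
  hence E: "E > 0" using assms by simp
  have "(m * E) * \<rho> \<le> (m * E) * 1" using assms by (simp add: mult_ac)
  moreover have "m * E > 0" using E assms by simp
  ultimately have "\<rho> \<le> 1" by (meson mult_le_cancel_left_pos)
  define t where "t = S / m - \<rho> * E"
  have S: "S = m * (\<rho> * E + t)" and t: "0 \<le> t" "t \<le> (1 - \<rho>) * E"
    using assms unfolding t_def by (simp_all add: field_simps)
  have key: "t * ((m - 1) * (1 + D) - m * \<rho>) + \<rho> * (1 - \<rho>) * E \<ge> 0"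
  proof (cases "(m - 1) * (1 + D) - m * \<rho> \<ge> 0")
    case True
    thus ?thesis using t \<open>\<rho> \<le> 1\<close> E assms by (simp add: add_nonneg_nonneg)
  next
    case False
    have "t * ((m - 1) * (1 + D) - m * \<rho>) \<ge> (1 - \<rho>) * E * ((m - 1) * (1 + D) - m * \<rho>)"
      using t False by (simp add: mult_right_mono_neg)
    moreover have "(1 - \<rho>) * E * ((m - 1) * (1 + D) - m * \<rho>) + \<rho> * (1 - \<rho>) * E
                   = (1 - \<rho>) * E * ((m - 1) * (1 + D - \<rho>))"
      by (simp add: algebra_simps)
    moreover have "(1 - \<rho>) * E * ((m - 1) * (1 + D - \<rho>)) \<ge> 0"
      using \<open>\<rho> \<le> 1\<close> E assms by simp
    ultimately show ?thesis by linarith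
  qed
  have "((1 - \<rho>)^2 - D * \<rho>) * (m * (m - 1) * E)
          - (m * (m - 1) * E - (m - 1) * S - m * \<rho> * (m * E - S) - D * (m - 1) * S)
        = m * (t * ((m - 1) * (1 + D) - m * \<rho>) + \<rho> * (1 - \<rho>) * E)"
    unfolding S by (simp add: algebra_simps power2_eq_square)
  moreover have "m * (t * ((m - 1) * (1 + D) - m * \<rho>) + \<rho> * (1 - \<rho>) * E) \<ge> 0"
    using key assms by simp
  ultimately show ?thesis by linarith
qed

lemma matrix_vector_mult_row: "(A *v z) $ r = (A $ r) \<bullet> z"
  for A :: "real^'n^'m"
  by (simp add: matrix_vector_mult_def inner_vec_def mult.commute)

lemma norm_matrix_vector_mult_sq: "(norm (A *v z))^2 = (\<Sum>r\<in>UNIV. ((A $ r) \<bullet> z)^2)"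
  for A :: "real^'n^'m"
  unfolding power2_norm_eq_inner inner_vec_def matrix_vector_mult_row by (simp add: power2_eq_square)

lemma inv_norm_bound:
  fixes A :: "real^'n^'m"
  assumes "rank A = CARD('n)"
  shows "inv_norm A > 0" and "norm z \<le> inv_norm A * norm (A *v z)"
proof -
  have inj: "inj ((*v) A)" using assms full_rank_injective by blast
  hence nz: "norm (A *v z) > 0" if "z \<noteq> 0" for z
    using that by (metis injD matrix_vector_mult_0_right zero_less_norm_iff)
  obtain B where B: "B > 0" "\<And>x. B * norm x \<le> norm (A *v x)"
    using linear_inj_bounded_below_pos[OF matrix_vector_mul_linear inj] by blast
  define S where "S = {M. \<forall>z. M * norm (A *v z) \<ge> norm z}"
  have "1 / B \<in> S" unfolding S_def using B by (auto simp: divide_simps mult.commute)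
  hence "S \<noteq> {}" by blast
  have ratio: "norm z / norm (A *v z) \<le> inv_norm A" if "z \<noteq> 0" for z
    unfolding inv_norm_def S_def[symmetric]
  proof (rule cInf_greatest[OF \<open>S \<noteq> {}\<close>])
    fix M assume "M \<in> S"
    thus "norm z / norm (A *v z) \<le> M" using nz[OF that] unfolding S_def by (simp add: divide_simps)
  qed
  show "norm z \<le> inv_norm A * norm (A *v z)"
    using ratio[of z] nz[of z] by (cases "z = 0") (auto simp: divide_simps)
  obtain i :: 'n where True by blast
  have "(axis i 1 :: real^'n) \<noteq> 0" by (simp add: axis_eq_0_iff)
  thus "inv_norm A > 0"
    using ratio nz by (meson divide_pos_pos less_le_trans zero_less_norm_iff)
qed

lemma inv_norm_bound_sq:
  fixes A :: "real^'n^'m"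
  assumes "rank A = CARD('n)"
  shows "(norm z)^2 / (inv_norm A)^2 \<le> (norm (A *v z))^2"
proof -
  have "(norm z)^2 \<le> (inv_norm A * norm (A *v z))^2"
    using inv_norm_bound(2)[OF assms, of z] by (simp add: power_mono)
  thus ?thesis using inv_norm_bound(1)[OF assms] by (simp add: divide_simps power_mult_distrib mult.commute)
qed

lemma frob_sq_standardized:
  fixes A :: "real^'n^'m"
  assumes "standardized A"
  shows "frob_sq A = real CARD('m)"
proof -
  have "(\<Sum>j\<in>UNIV. (A $ i $ j)^2) = (norm (A $ i))^2" for i
    unfolding power2_norm_eq_inner inner_vec_def by (simp add: power2_eq_square)
  thus ?thesis using assms unfolding frob_sq_def standardized_def by simp
qed

lemma row_inner_self:
  fixes A :: "real^'n^'m"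
  assumes "standardized A"
  shows "(A $ r) \<bullet> (A $ r) = 1"
  using assms unfolding standardized_def by (simp add: norm_eq_sqrt_inner)

lemma norm_matrix_vector_mult_standardized:
  fixes A :: "real^'n^'m"
  assumes "standardized A"
  shows "(norm (A *v z))^2 \<le> real CARD('m) * (norm z)^2"
proof -
  have "((A $ r) \<bullet> z)^2 \<le> (norm z)^2" for r
  proof -
    have "\<bar>(A $ r) \<bullet> z\<bar> \<le> norm z"
      using Cauchy_Schwarz_ineq2[of "A $ r" z] assms unfolding standardized_def by simp
    thus ?thesis by (metis abs_ge_zero power2_abs power_mono)
  qed
  thus ?thesis unfolding norm_matrix_vector_mult_sq
    using sum_bounded_above[of UNIV "\<lambda>r. ((A $ r) \<bullet> z)^2" "(norm z)^2"] by simp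
qed

lemma coherence_bounds:
  fixes A :: "real^'n^'m"
  assumes np: "no_parallel_rows A" and rs: "r \<noteq> s"
  shows "coh_min A \<le> \<bar>A $ r \<bullet> A $ s\<bar>" "\<bar>A $ r \<bullet> A $ s\<bar> \<le> coh_max A"
    "0 \<le> coh_min A" "coh_max A < 1"
proof -
  define C where "C = {\<bar>(A $ j) \<bullet> (A $ k)\<bar> | j k. j \<noteq> k}"
  have "C \<subseteq> range (\<lambda>(j, k). \<bar>(A $ j) \<bullet> (A $ k)\<bar>)" unfolding C_def by auto
  hence fin: "finite C" by (rule finite_subset) simp
  have inC: "\<bar>A $ r \<bullet> A $ s\<bar> \<in> C" using rs unfolding C_def by blast
  have cm: "coh_min A = Min C" "coh_max A = Max C" unfolding coh_min_def coh_max_def C_def by simp_all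
  show "coh_min A \<le> \<bar>A $ r \<bullet> A $ s\<bar>" "\<bar>A $ r \<bullet> A $ s\<bar> \<le> coh_max A"
    unfolding cm using fin inC by simp_all
  have "Min C \<in> C" "Max C \<in> C" using fin inC by (auto intro: Min_in Max_in)
  thus "0 \<le> coh_min A" "coh_max A < 1"
    unfolding cm C_def using np unfolding no_parallel_rows_def by auto
qed

lemma two_le_card_rows:
  assumes "CARD('n::finite) < CARD('m::finite)"
  shows "2 \<le> CARD('m)"
proof -
  have "0 < CARD('n)" by simp
  thus ?thesis using assms by linarith
qed

lemma coherence_gain_min_nonneg:
  fixes A :: "real^'n^'m"
  assumes "no_parallel_rows A" "CARD('m) \<ge> 2"
  shows "0 \<le> min (coherence_gain (coh_min A)) (coherence_gain (coh_max A))"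
proof -
  have "\<not> CARD('m) \<le> Suc 0" using assms(2) by simp
  then obtain r s :: 'm where "r \<noteq> s" by (auto simp: card_le_Suc0_iff_eq)
  note bounds = coherence_bounds[OF assms(1) this]
  have "0 \<le> coherence_gain t" if "0 \<le> t" "t < 1" for t
    using that unfolding coherence_gain_def by simp
  thus ?thesis using bounds by simp
qed

section \<open>One step of the method\<close>

text \<open>The error after one step: the two projections remove the components of d = x - x_k along
  a_s and along the unit vector v orthogonal to a_s in span{a_r, a_s}.\<close>
lemma step_error:
  fixes A :: "real^'n^'m" and x xk :: "real^'n"
  assumes std: "standardized A" and mu: "\<bar>(A $ r) \<bullet> (A $ s)\<bar> < 1" and bx: "b = A *v x"
  shows "(norm (x - tsk_step A b xk (r, s)))^2 = (norm (x - xk))^2 - ((A $ s) \<bullet> (x - xk))^2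
     - ((A $ r) \<bullet> (x - xk) - ((A $ r) \<bullet> (A $ s)) * ((A $ s) \<bullet> (x - xk)))^2 / (1 - ((A $ r) \<bullet> (A $ s))^2)"
proof -
  define a c where "a = A $ r" and "c = A $ s"
  define \<mu> d where "\<mu> = a \<bullet> c" and "d = x - xk"
  define w sq where "w = c \<bullet> d" and "sq = sqrt (1 - \<mu>^2)"
  define v where "v = (1 / sq) *\<^sub>R (a - \<mu> *\<^sub>R c)"
  define y where "y = xk + (b $ s - xk \<bullet> c) *\<^sub>R c"
  define z where "z = x - y"
  have ca: "c \<bullet> c = 1" "a \<bullet> a = 1" using row_inner_self[OF std] unfolding a_def c_def by auto
  have mu2: "\<mu>^2 < 1" using mu unfolding \<mu>_def a_def c_def by (simp add: abs_square_less_1)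
  have sqp: "sq > 0" and sq2: "sq^2 = 1 - \<mu>^2" using mu2 unfolding sq_def by auto
  have bs: "b $ s = c \<bullet> x" "b $ r = a \<bullet> x" using bx by (simp_all add: matrix_vector_mult_row a_def c_def)
  have "tsk_step A b xk (r, s) = y + ((b $ r - b $ s * \<mu>) / sq - y \<bullet> v) *\<^sub>R v"
    unfolding tsk_step_def Let_def y_def v_def sq_def \<mu>_def a_def c_def by simp
  also have "(b $ r - b $ s * \<mu>) / sq = x \<bullet> v" unfolding v_def bs
    by (simp add: inner_diff_right inner_commute divide_simps)
  finally have proj: "x - tsk_step A b xk (r, s) = z - (z \<bullet> v) *\<^sub>R v"
    unfolding z_def by (simp add: inner_diff_left algebra_simps)
  have z: "z = d - w *\<^sub>R c" unfolding z_def y_def d_def w_def bs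
    by (simp add: algebra_simps inner_diff_right inner_commute)
  have "v \<bullet> v = (1 / sq)^2 * ((a - \<mu> *\<^sub>R c) \<bullet> (a - \<mu> *\<^sub>R c))"
    unfolding v_def by (simp add: power2_eq_square)
  also have "(a - \<mu> *\<^sub>R c) \<bullet> (a - \<mu> *\<^sub>R c) = 1 - \<mu>^2"
    using ca unfolding \<mu>_def by (simp add: inner_diff_left inner_diff_right inner_commute power2_eq_square)
  finally have vv: "v \<bullet> v = 1" using sq2 sqp mu2 by (simp add: power_divide)
  have zz: "z \<bullet> z = d \<bullet> d - w^2"
    unfolding z using ca unfolding w_def
    by (simp add: inner_diff_left inner_diff_right inner_commute power2_eq_square)
  have zv: "z \<bullet> v = (a \<bullet> d - \<mu> * w) / sq"
    unfolding z v_def using ca unfolding w_def \<mu>_def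
    by (simp add: inner_diff_left inner_diff_right inner_commute algebra_simps divide_simps)
  have "(norm (x - tsk_step A b xk (r, s)))^2 = z \<bullet> z - (z \<bullet> v)^2"
    unfolding proj power2_norm_eq_inner using vv
    by (simp add: inner_diff_left inner_diff_right inner_commute power2_eq_square)
  also have "\<dots> = d \<bullet> d - w^2 - (a \<bullet> d - \<mu> * w)^2 / (1 - \<mu>^2)"
    unfolding zz zv using sq2 by (simp add: power_divide)
  finally show ?thesis unfolding a_def c_def \<mu>_def d_def w_def power2_norm_eq_inner
    by (simp add: inner_commute)
qed

text \<open>The same identity with the quotient split into the residual term q and the coherence
  term \<mu>^2/(1-\<mu>^2) q, which are bounded below separately.\<close>
lemma step_error_split:
  fixes A :: "real^'n^'m" and x xk :: "real^'n"
  assumes std: "standardized A" and np: "no_parallel_rows A" and bx: "b = A *v x" and rs: "r \<noteq> s"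
  defines "\<mu> \<equiv> (A $ r) \<bullet> (A $ s)"
    and "q \<equiv> ((A $ r) \<bullet> (x - xk) - ((A $ r) \<bullet> (A $ s)) * ((A $ s) \<bullet> (x - xk)))^2"
  shows "(norm (x - tsk_step A b xk (r, s)))^2
         = (norm (x - xk))^2 - ((A $ s) \<bullet> (x - xk))^2 - q - \<mu>^2 / (1 - \<mu>^2) * q"
proof -
  have \<mu>: "\<bar>\<mu>\<bar> < 1" using np rs unfolding no_parallel_rows_def \<mu>_def by blast
  hence "\<mu>^2 < 1" by (simp add: abs_square_less_1)
  hence "q / (1 - \<mu>^2) = q + \<mu>^2 / (1 - \<mu>^2) * q" by (simp add: field_simps)
  thus ?thesis using step_error[OF std \<mu>[unfolded \<mu>_def] bx, of xk] unfolding q_def \<mu>_def by simp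
qed

section \<open>Sums over ordered pairs of distinct rows\<close>

lemma sum_ordered_pairs:
  fixes G :: "'m::finite \<times> 'm \<Rightarrow> 'a::ab_group_add"
  shows "(\<Sum>p\<in>ordered_pairs. G p) = (\<Sum>r\<in>UNIV. \<Sum>s\<in>UNIV. G (r, s)) - (\<Sum>r\<in>UNIV. G (r, r))"
proof -
  define diag where "diag = range (\<lambda>r::'m. (r, r))"
  have "ordered_pairs = UNIV - diag" unfolding ordered_pairs_def diag_def by auto
  moreover have "sum G UNIV = sum G (UNIV - diag) + sum G diag" by (rule sum.subset_diff) auto
  moreover have "sum G diag = (\<Sum>r\<in>UNIV. G (r, r))" unfolding diag_def
    by (subst sum.reindex) (auto simp: inj_on_def)
  moreover have "sum G UNIV = (\<Sum>r\<in>UNIV. \<Sum>s\<in>UNIV. G (r, s))"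
    by (simp add: sum.cartesian_product UNIV_Times_UNIV[symmetric] del: UNIV_Times_UNIV)
  ultimately show ?thesis by (simp add: algebra_simps)
qed

lemma sum_ordered_pairs_swap:
  fixes G :: "'m \<times> 'm \<Rightarrow> 'a::comm_monoid_add"
  shows "(\<Sum>p\<in>ordered_pairs. G (prod.swap p)) = (\<Sum>p\<in>ordered_pairs. G p)"
proof -
  have "prod.swap ` ordered_pairs = (ordered_pairs :: ('m \<times> 'm) set)"
    unfolding ordered_pairs_def by (auto simp: image_iff)
  moreover have "inj_on prod.swap (ordered_pairs :: ('m \<times> 'm) set)" by (rule inj_swap)
  ultimately show ?thesis using sum.reindex[of prod.swap ordered_pairs G] by simp
qed

lemma sum_ordered_pairs_snd:
  fixes f :: "'m::finite \<Rightarrow> real"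
  shows "(\<Sum>p\<in>ordered_pairs. f (snd p)) = (real CARD('m) - 1) * (\<Sum>i\<in>UNIV. f i)"
  unfolding sum_ordered_pairs by (simp add: algebra_simps)

lemma sum_ordered_pairs_fst:
  fixes f :: "'m::finite \<Rightarrow> real"
  shows "(\<Sum>p\<in>ordered_pairs. f (fst p)) = (real CARD('m) - 1) * (\<Sum>i\<in>UNIV. f i)"
  using sum_ordered_pairs_swap[of "\<lambda>p. f (snd p)"] sum_ordered_pairs_snd[of f] by simp

lemma card_ordered_pairs:
  "real (card (ordered_pairs :: ('m::finite \<times> 'm) set)) = real CARD('m) * (real CARD('m) - 1)"
  using sum_ordered_pairs_snd[of "\<lambda>_ :: 'm. 1 :: real"] by simp

text \<open>Summed over s, the residuals u_r - \<mu>_{rs} u_s are the entries of A(d - u_s a_s); the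
  inverse norm bounds each |A(d - u_s a_s)|^2 below by |d - u_s a_s|^2 = |d|^2 - u_s^2.\<close>
lemma residual_sum_bound:
  fixes A :: "real^'n^'m" and d :: "real^'n"
  assumes std: "standardized A" and rk: "rank A = CARD('n)"
  shows "(real CARD('m) * (norm d)^2 - (norm (A *v d))^2) / (inv_norm A)^2
     \<le> (\<Sum>(r, s)\<in>ordered_pairs. ((A $ r) \<bullet> d - ((A $ r) \<bullet> (A $ s)) * ((A $ s) \<bullet> d))^2)"
proof -
  define u where "u i = (A $ i) \<bullet> d" for i
  define q where "q r s = (u r - ((A $ r) \<bullet> (A $ s)) * u s)^2" for r s
  have residual: "(A $ r) \<bullet> (d - u s *\<^sub>R A $ s) = u r - ((A $ r) \<bullet> (A $ s)) * u s" for r s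
    unfolding u_def by (simp add: inner_diff_right mult.commute)
  have removed: "(norm (d - u s *\<^sub>R A $ s))^2 = (norm d)^2 - (u s)^2" for s
    using row_inner_self[OF std, of s] unfolding power2_norm_eq_inner u_def
    by (simp add: inner_diff_left inner_diff_right inner_commute power2_eq_square)
  have "(real CARD('m) * (norm d)^2 - (norm (A *v d))^2) / (inv_norm A)^2
        = (\<Sum>s\<in>UNIV. (norm (d - u s *\<^sub>R A $ s))^2 / (inv_norm A)^2)"
    unfolding removed
    by (simp add: norm_matrix_vector_mult_sq u_def sum_divide_distrib[symmetric] sum_subtractf)
  also have "\<dots> \<le> (\<Sum>s\<in>UNIV. (norm (A *v (d - u s *\<^sub>R A $ s)))^2)"
    by (rule sum_mono) (rule inv_norm_bound_sq[OF rk])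
  also have "\<dots> = (\<Sum>s\<in>UNIV. \<Sum>r\<in>UNIV. q r s)"
    unfolding norm_matrix_vector_mult_sq residual q_def ..
  also have "\<dots> = (\<Sum>r\<in>UNIV. \<Sum>s\<in>UNIV. q r s)" by (rule sum.swap)
  also have "\<dots> = (\<Sum>(r, s)\<in>ordered_pairs. q r s)"
    using row_inner_self[OF std] unfolding sum_ordered_pairs by (simp add: q_def case_prod_beta)
  finally show ?thesis unfolding q_def u_def .
qed

text \<open>Pairing (r,s) with (s,r) and applying the scalar pair bound: the coherence terms are
  at least D (m-1) \<Sum>_i u_i^2, for an arbitrary vector u.\<close>
lemma coherence_sum_bound:
  fixes A :: "real^'n^'m" and u :: "'m \<Rightarrow> real"
  assumes np: "no_parallel_rows A"
  shows "min (coherence_gain (coh_min A)) (coherence_gain (coh_max A)) * (real CARD('m) - 1)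
           * (\<Sum>i\<in>UNIV. (u i)^2)
     \<le> (\<Sum>(r, s)\<in>ordered_pairs.
           ((A $ r) \<bullet> (A $ s))^2 / (1 - ((A $ r) \<bullet> (A $ s))^2) * (u r - ((A $ r) \<bullet> (A $ s)) * u s)^2)"
proof -
  define D where "D = min (coherence_gain (coh_min A)) (coherence_gain (coh_max A))"
  define \<mu> where "\<mu> r s = (A $ r) \<bullet> (A $ s)" for r s
  define h where "h p = (\<mu> (fst p) (snd p))^2 / (1 - (\<mu> (fst p) (snd p))^2)
                          * (u (fst p) - \<mu> (fst p) (snd p) * u (snd p))^2" for p
  have pair: "D * ((u (fst p))^2 + (u (snd p))^2) \<le> h p + h (prod.swap p)"
    if "p \<in> ordered_pairs" for p
  proof -
    obtain r s where p: "p = (r, s)" and rs: "r \<noteq> s"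
      using \<open>p \<in> ordered_pairs\<close> unfolding ordered_pairs_def by auto
    have "\<mu> s r = \<mu> r s" unfolding \<mu>_def by (simp add: inner_commute)
    thus ?thesis unfolding D_def h_def p \<mu>_def
      using coherence_pair_bound[of "coh_min A" "\<mu> r s" "coh_max A" "u r" "u s"]
        coherence_bounds[OF np rs] by (simp add: \<mu>_def algebra_simps)
  qed
  have "2 * (D * (real CARD('m) - 1) * (\<Sum>i\<in>UNIV. (u i)^2))
        = (\<Sum>p\<in>ordered_pairs. D * ((u (fst p))^2 + (u (snd p))^2))"
    using sum_ordered_pairs_fst[of "\<lambda>i. (u i)^2"] sum_ordered_pairs_snd[of "\<lambda>i. (u i)^2"]
    by (simp add: sum_distrib_left[symmetric] sum.distrib)
  also have "\<dots> \<le> (\<Sum>p\<in>ordered_pairs. h p + h (prod.swap p))"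
    by (rule sum_mono) (rule pair)
  also have "\<dots> = 2 * (\<Sum>p\<in>ordered_pairs. h p)"
    by (simp add: sum.distrib sum_ordered_pairs_swap)
  finally show ?thesis unfolding D_def h_def \<mu>_def by (simp add: case_prod_beta)
qed

definition tsk_rate :: "real^'n^'m \<Rightarrow> real" where
  "tsk_rate A = (1 - 1 / scaled_cond A)^2
     - min (coherence_gain (coh_min A)) (coherence_gain (coh_max A)) / scaled_cond A"

lemma one_step_contraction:
  fixes A :: "real^'n^'m" and x xk :: "real^'n" and b :: "real^'m"
  assumes mn: "CARD('m) > CARD('n)" and rk: "rank A = CARD('n)" and std: "standardized A"
    and np: "no_parallel_rows A" and bx: "b = A *v x"
  shows "(\<Sum>p\<in>ordered_pairs. (norm (x - tsk_step A b xk p))^2)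
         \<le> tsk_rate A * (real CARD('m) * (real CARD('m) - 1)) * (norm (x - xk))^2"
proof -
  define d where "d = x - xk"
  define u where "u i = (A $ i) \<bullet> d" for i
  define \<mu> where "\<mu> r s = (A $ r) \<bullet> (A $ s)" for r s
  define q where "q r s = (u r - \<mu> r s * u s)^2" for r s
  define h where "h r s = (\<mu> r s)^2 / (1 - (\<mu> r s)^2) * q r s" for r s
  define m E S where "m = real CARD('m)" and "E = (norm d)^2" and "S = (norm (A *v d))^2"
  define \<rho> D where "\<rho> = 1 / scaled_cond A"
    and "D = min (coherence_gain (coh_min A)) (coherence_gain (coh_max A))"
  have m2: "m \<ge> 2" using two_le_card_rows[OF mn] unfolding m_def by simp
  have iv: "inv_norm A > 0" by (rule inv_norm_bound(1)[OF rk])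
  have \<rho>: "\<rho> = 1 / (m * (inv_norm A)^2)"
    unfolding \<rho>_def scaled_cond_def frob_sq_standardized[OF std] m_def ..
  have per_pair: "(norm (x - tsk_step A b xk (r, s)))^2 = E - (u s)^2 - q r s - h r s"
    if "(r, s) \<in> ordered_pairs" for r s
    using step_error_split[OF std np bx, of r s xk] that
    unfolding ordered_pairs_def E_def d_def u_def q_def h_def \<mu>_def by (simp add: mult.commute)
  have "(\<Sum>p\<in>ordered_pairs. (norm (x - tsk_step A b xk p))^2)
        = (\<Sum>(r, s)\<in>ordered_pairs. E - (u s)^2 - q r s - h r s)"
    using per_pair by (intro sum.cong) auto
  also have "\<dots> = m * (m - 1) * E - (m - 1) * S
                  - (\<Sum>(r, s)\<in>ordered_pairs. q r s) - (\<Sum>(r, s)\<in>ordered_pairs. h r s)"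
    using card_ordered_pairs[where 'm='m] sum_ordered_pairs_snd[of "\<lambda>i. (u i)^2"]
    unfolding S_def norm_matrix_vector_mult_sq m_def u_def
    by (simp add: sum_subtractf case_prod_beta)
  also have "\<dots> \<le> m * (m - 1) * E - (m - 1) * S - m * \<rho> * (m * E - S) - D * (m - 1) * S"
  proof -
    have "m * \<rho> * (m * E - S) \<le> (\<Sum>(r, s)\<in>ordered_pairs. q r s)"
      using residual_sum_bound[OF std rk, of d] m2 iv
      unfolding \<rho> m_def E_def S_def q_def u_def \<mu>_def by simp
    moreover have "D * (m - 1) * S \<le> (\<Sum>(r, s)\<in>ordered_pairs. h r s)"
      using coherence_sum_bound[OF np, of u]
      unfolding D_def m_def S_def norm_matrix_vector_mult_sq h_def q_def \<mu>_def u_def .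
    ultimately show ?thesis by linarith
  qed
  also have "\<dots> \<le> ((1 - \<rho>)^2 - D * \<rho>) * (m * (m - 1) * E)"
  proof (rule contraction_arith)
    show "m * \<rho> * E \<le> S"
      using inv_norm_bound_sq[OF rk, of d] m2 unfolding \<rho> E_def S_def by simp
    show "S \<le> m * E"
      using norm_matrix_vector_mult_standardized[OF std] unfolding S_def m_def E_def .
    show "0 \<le> D" using coherence_gain_min_nonneg[OF np two_le_card_rows[OF mn]] unfolding D_def .
  qed (use m2 iv \<rho> E_def in auto)
  finally show ?thesis unfolding tsk_rate_def \<rho>_def D_def m_def E_def d_def by (simp add: mult_ac)
qed

section \<open>Iterating the contraction\<close>

text \<open>A bound on the P-sum of V after one step iterates: summed over all sequences of length
  k from P, V after k steps is at most C^k times its initial value.  (C \<ge> 0 is forced by the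
  hypothesis unless V vanishes identically.)\<close>
lemma sum_sequences_contraction:
  fixes f :: "'s \<Rightarrow> 'p \<Rightarrow> 's" and V :: "'s \<Rightarrow> real"
  assumes nonneg: "\<And>y. 0 \<le> V y" and step: "\<And>y. (\<Sum>p\<in>P. V (f y p)) \<le> C * V y"
  shows "(\<Sum>ps\<in>{ps. set ps \<subseteq> P \<and> length ps = k}. V (foldl f y ps)) \<le> C^k * V y"
proof (cases "\<forall>z. V z = 0")
  case True
  thus ?thesis by simp
next
  case False
  then obtain z where "V z \<noteq> 0" by blast
  hence "V z > 0" using nonneg[of z] by simp
  moreover have "0 \<le> C * V z" using step[of z] nonneg by (meson order.trans sum_nonneg)
  ultimately have C: "0 \<le> C" by (simp add: zero_le_mult_iff)
  show ?thesis
  proof (induction k arbitrary: y)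
    case 0
    have "{ps. set ps \<subseteq> P \<and> length ps = 0} = {[]}" by auto
    thus ?case by simp
  next
    case (Suc k)
    have "(\<Sum>ps\<in>{ps. set ps \<subseteq> P \<and> length ps = Suc k}. V (foldl f y ps))
          = (\<Sum>ps\<in>{ps. set ps \<subseteq> P \<and> length ps = k}. \<Sum>p\<in>P. V (foldl f (f y p) ps))"
      unfolding lists_length_Suc_eq
      by (subst sum.reindex) (auto simp: inj_on_def sum.cartesian_product case_prod_beta)
    also have "\<dots> = (\<Sum>p\<in>P. \<Sum>ps\<in>{ps. set ps \<subseteq> P \<and> length ps = k}. V (foldl f (f y p) ps))"
      by (rule sum.swap)
    also have "\<dots> \<le> (\<Sum>p\<in>P. C^k * V (f y p))"
      by (rule sum_mono) (rule Suc.IH)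
    also have "\<dots> \<le> C^k * (C * V y)"
      using step[of y] C by (simp add: sum_distrib_left[symmetric] mult_left_mono)
    finally show ?case by (simp add: mult_ac)
  qed
qed

lemma tsk_expected_sq_err_average:
  fixes A :: "real^'n^'m"
  assumes "2 \<le> CARD('m)"
  shows "tsk_expected_sq_err A b x0 x k
         = (\<Sum>ps\<in>pair_seqs k. (norm (x - tsk_iter A b x0 ps))^2)
             / (real CARD('m) * (real CARD('m) - 1))^k"
proof -
  have seqs: "pair_seqs k = {ps. set ps \<subseteq> (ordered_pairs :: ('m \<times> 'm) set) \<and> length ps = k}"
    unfolding pair_seqs_def by auto
  have fin: "finite (pair_seqs k :: ('m \<times> 'm) list set)"
    unfolding seqs by (rule finite_lists_length_eq) simp
  have card: "real (card (pair_seqs k :: ('m \<times> 'm) list set)) = (real CARD('m) * (real CARD('m) - 1))^k"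
    unfolding seqs card_lists_length_eq[OF finite] using card_ordered_pairs[where 'm='m] by simp
  moreover have "real CARD('m) * (real CARD('m) - 1) > 0" using assms by simp
  ultimately have "pair_seqs k \<noteq> ({} :: ('m \<times> 'm) list set)" by (metis card.empty of_nat_0 less_irrefl zero_less_power)
  thus ?thesis unfolding tsk_expected_sq_err_def card[symmetric]
    by (simp add: integral_pmf_of_set[OF _ fin])
qed

theorem theorem1:
  fixes A :: "real^'n^'m" and x x0 :: "real^'n" and b :: "real^'m"
  assumes "CARD('m) > CARD('n)"
    and "rank A = CARD('n)"
    and "standardized A"
    and "no_parallel_rows A"
    and "b = A *v x"
  shows "\<forall>k::nat. tsk_expected_sq_err A b x0 x k \<le>
     ((1 - 1 / scaled_cond A)^2 - min ((coh_min A)^2 * (1 - coh_min A) / (1 + coh_min A))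
                                       ((coh_max A)^2 * (1 - coh_max A) / (1 + coh_max A))
                                 / scaled_cond A) ^ k * (norm (x - x0))^2"
proof
  fix k :: nat
  define N where "N = real CARD('m) * (real CARD('m) - 1)"
  have m2: "2 \<le> CARD('m)" using two_le_card_rows assms(1) .
  hence N: "N > 0" unfolding N_def by simp
  have seqs: "pair_seqs k = {ps. set ps \<subseteq> ordered_pairs \<and> length ps = k}"
    unfolding pair_seqs_def by auto
  have "(\<Sum>ps\<in>pair_seqs k. (norm (x - tsk_iter A b x0 ps))^2) \<le> (tsk_rate A * N)^k * (norm (x - x0))^2"
    unfolding seqs tsk_iter_def
    by (rule sum_sequences_contraction) (use one_step_contraction[OF assms] in \<open>simp_all add: N_def\<close>)
  hence "tsk_expected_sq_err A b x0 x k \<le> tsk_rate A ^ k * (norm (x - x0))^2"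
    unfolding tsk_expected_sq_err_average[OF m2] N_def[symmetric] using N
    by (simp add: divide_le_eq power_mult_distrib mult_ac)
  thus "tsk_expected_sq_err A b x0 x k \<le> ((1 - 1 / scaled_cond A)^2
      - min ((coh_min A)^2 * (1 - coh_min A) / (1 + coh_min A))
            ((coh_max A)^2 * (1 - coh_max A) / (1 + coh_max A)) / scaled_cond A) ^ k
      * (norm (x - x0))^2"
    unfolding tsk_rate_def coherence_gain_def .
qed

end
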